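(* Let $P,P_1,P_2\in\mathbb R^{d\times d}$ be irreducible stochastic matrices with stationary distributions $\mu,\mu_1,\mu_2$. Then: 1. For any $y\in\mathbb R^d$ with $\mu^\top y=0$, the vector $x:=\sum_{k=0}^\infty\mathcal P^ky/2$ is a solution of the Poisson equation $(I-P)x=y$, and $\|x\|_\infty\le\frac{C}{1-\rho}\|y\|_\infty$, where $(C,\rho)$ are mixing parameters of $\mathcal P$. 2. Let $y_1,y_2\in\mathbb R^d$ with $\mu_1^\top y_1=\mu_2^\top y_2=0$, and let $x_1=\sum_{k=0}^\infty\mathcal P_1^ky_1/2$ and $x_2=\sum_{k=0}^\infty\mathcal P_2^ky_2/2$ be the solutions of $(I-P_1)x=y_1$ and $(I-P_2)x=y_2$. Then \[ \|x_1-x_2\|_\infty\le\frac14\left(\frac{\log(\|P_1-P_2\|_\infty(1-\rho_{\max}))-\log(8C_{\max})}{\log(\rho_{\max})}\right)^2\|P_1-P_2\|_\infty(\|y_1\|_\infty+\|y_2\|_\infty) +\frac12\left(\frac{\log(\|P_1-P_2\|_\infty(1-\rho_{\max}))-\log(8C_{\max})}{\log(\rho_{\max})}\right)\|y_1-y_2\|_\infty, \] where $C_{\max}=\max(C_1,C_2)$, $\rho_{\max}=\max(\rho_1,\rho_2)$, and $(C_1,\rho_1)$, $(C_2,\rho_2)$ are mixing parameters of $\mathcal P_1$, $\mathcal P_2$.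
   Context: For an irreducible stochastic matrix $P$ on a finite set of size $d$, $\mathcal P=(P+I)/2$ denotes the associated lazy transition matrix (likewise $\mathcal P_i=(P_i+I)/2$); it is irreducible, aperiodic and has the same stationary distribution. A pair $(C,\rho)$ with $C>0$, $\rho\in(0,1)$ is called mixing parameters of $\mathcal P$ if $\max_{i}\|\mathcal P^k(i,\cdot)-\mu(\cdot)\|_{\mathrm{TV}}\le C\rho^k$ for all $k\ge0$, where $\|\cdot\|_{\mathrm{TV}}$ is total variation distance (half the $\ell_1$ distance). For vectors $\|\cdot\|_\infty$ is the max norm; for matrices it is the induced norm (maximum absolute row sum). *)

theory Defs
  imports "HOL-Analysis.Analysis"
begin

text \<open>Matrix power with respect to matrix multiplication (the componentwise ring
  structure on vec makes ^ unusable for this).\<close>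
definition mpow :: "real^'n^'n \<Rightarrow> nat \<Rightarrow> real^'n^'n" where
  "mpow A k = ((\<lambda>M. M ** A) ^^ k) (mat 1)"

definition stochastic :: "real^'n^'n \<Rightarrow> bool" where
  "stochastic P \<longleftrightarrow> (\<forall>i j. P$i$j \<ge> 0) \<and> (\<forall>i. (\<Sum>j\<in>UNIV. P$i$j) = 1)"

definition irreducible :: "real^'n^'n \<Rightarrow> bool" where
  "irreducible P \<longleftrightarrow> (\<forall>i j. \<exists>k. mpow P k $ i $ j > 0)"

definition stationary_dist :: "real^'n^'n \<Rightarrow> real^'n \<Rightarrow> bool" where
  "stationary_dist P \<mu> \<longleftrightarrow> (\<forall>i. \<mu>$i \<ge> 0) \<and> (\<Sum>i\<in>UNIV. \<mu>$i) = 1 \<and> \<mu> v* P = \<mu>"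

definition lazy :: "real^'n^'n \<Rightarrow> real^'n^'n" where
  "lazy P = (1/2) *\<^sub>R (P + mat 1)"

definition tv_dist :: "real^'n \<Rightarrow> real^'n \<Rightarrow> real" where
  "tv_dist p q = (1/2) * (\<Sum>j\<in>UNIV. \<bar>p$j - q$j\<bar>)"

definition mixing_params :: "real^'n^'n \<Rightarrow> real^'n \<Rightarrow> real \<Rightarrow> real \<Rightarrow> bool" where
  "mixing_params Q \<mu> C \<rho> \<longleftrightarrow> C > 0 \<and> 0 < \<rho> \<and> \<rho> < 1 \<and>
     (\<forall>k. (MAX i\<in>UNIV. tv_dist (mpow Q k $ i) \<mu>) \<le> C * \<rho> ^ k)"

definition vnorm_inf :: "real^'n \<Rightarrow> real" where
  "vnorm_inf x = (MAX i\<in>UNIV. \<bar>x$i\<bar>)"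

definition mnorm_inf :: "real^'n^'n \<Rightarrow> real" where
  "mnorm_inf A = (MAX i\<in>UNIV. \<Sum>j\<in>UNIV. \<bar>A$i$j\<bar>)"

end

(* Write L for the lazy chain (P + I)/2. Its k-th power has rows within C rho^k of mu in
   total variation, so |L^k y| <= 2 C rho^k |y| whenever mu^T y = 0: the series of the L^k y
   converges geometrically, it telescopes to (I - L)^-1 y, and I - P = 2 (I - L).

   For two chains, split the difference of the series at N = floor K. The k-th head term is at
   most |y1 - y2| + k eps (|y1| + |y2|) / 4, since |L1^k - L2^k| <= k |L1 - L2| = k eps / 2,
   and K is chosen so that the geometric tail from K on is eps (|y1| + |y2|) / 4. Starting the
   tail at N instead costs a factor rho^(N - K), harmless as long as rho >= 1/6. A smaller rho
   forces two states: the eigenvalues of L - 1 mu^T have modulus at most rho, while its trace is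
   at least d/2 - 1. For two states everything is explicit, since L acts on the line mu^T y = 0
   as multiplication by 1 - (p + q)/2, where p and q are the off-diagonal entries of P. *)

theory Submission
  imports Defs "HOL-Computational_Algebra.Fundamental_Theorem_Algebra"
begin

section \<open>Matrix powers and the maximum norm\<close>

lemma mpow_0 [simp]: "mpow A 0 = mat 1"
  by (simp add: mpow_def)

lemma mpow_Suc: "mpow A (Suc k) = mpow A k ** A"
  by (simp add: mpow_def)

lemma mpow_add: "mpow A (m + n) = mpow A m ** mpow A n"
  by (induction n) (simp_all add: mpow_Suc matrix_mul_assoc)

lemma mpow_Suc_left: "mpow A (Suc k) = A ** mpow A k"
  using mpow_add[of A 1 k] by (simp add: mpow_Suc)

lemma mpow_Suc_mult_vec: "mpow A (Suc k) *v y = A *v (mpow A k *v y)"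
  by (simp add: mpow_Suc_left matrix_vector_mul_assoc)

lemma vnorm_inf_eq_infnorm: "vnorm_inf x = infnorm x"
proof -
  have "{\<bar>x$i\<bar> |i. i \<in> UNIV} = range (\<lambda>i. \<bar>x$i\<bar>)"
    by blast
  then show ?thesis
    by (simp add: vnorm_inf_def infnorm_cart cSup_eq_Max)
qed

lemma infnorm_cart_leI: "(\<And>i. \<bar>x$i\<bar> \<le> c) \<Longrightarrow> infnorm x \<le> c"
  unfolding vnorm_inf_eq_infnorm[symmetric] vnorm_inf_def by (subst Max_le_iff) auto

lemma infnorm_sum_le: "infnorm (\<Sum>k\<in>A. f k) \<le> (\<Sum>k\<in>A. infnorm (f k))"
  by (induction A rule: infinite_finite_induct)
    (auto simp: infnorm_0 intro: order_trans[OF infnorm_triangle])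

lemma summable_infnorm_comparison:
  fixes f :: "nat \<Rightarrow> 'a::euclidean_space"
  assumes "\<And>k. infnorm (f k) \<le> b k" "summable b"
  shows "summable f"
proof (rule summable_comparison_test')
  show "summable (\<lambda>k. sqrt DIM('a) * b k)"
    using assms(2) by (rule summable_mult)
  show "norm (f k) \<le> sqrt DIM('a) * b k" for k
    using norm_le_infnorm[of "f k"] assms(1)[of k]
    by (meson order_trans mult_left_mono real_sqrt_ge_zero of_nat_0_le_iff)
qed

lemma infnorm_suminf_le:
  fixes f :: "nat \<Rightarrow> 'a::euclidean_space"
  assumes "\<And>k. infnorm (f k) \<le> b k" "summable b"
  shows "infnorm (suminf f) \<le> suminf b"
proof (rule LIMSEQ_le)
  show "(\<lambda>n. infnorm (\<Sum>k<n. f k)) \<longlonglongrightarrow> infnorm (suminf f)"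
    using summable_infnorm_comparison[OF assms]
    by (intro tendsto_infnorm summable_LIMSEQ)
  show "(\<lambda>n. \<Sum>k<n. b k) \<longlonglongrightarrow> suminf b"
    using assms(2) by (rule summable_LIMSEQ)
  have "infnorm (\<Sum>k<n. f k) \<le> (\<Sum>k<n. b k)" for n
    by (rule order_trans[OF infnorm_sum_le sum_mono]) (rule assms(1))
  then show "\<exists>N. \<forall>n\<ge>N. infnorm (\<Sum>k<n. f k) \<le> (\<Sum>k<n. b k)"
    by blast
qed

lemma row_norm_le_mnorm_inf: "(\<Sum>j\<in>UNIV. \<bar>A$i$j\<bar>) \<le> mnorm_inf A"
  unfolding mnorm_inf_def by (rule Max_ge) auto

lemma mnorm_inf_leI: "(\<And>i. (\<Sum>j\<in>UNIV. \<bar>A$i$j\<bar>) \<le> c) \<Longrightarrow> mnorm_inf A \<le> c"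
  unfolding mnorm_inf_def by (subst Max_le_iff) auto

lemma mnorm_inf_nonneg: "0 \<le> mnorm_inf A"
  using row_norm_le_mnorm_inf[of A] sum_nonneg[of UNIV "\<lambda>j. \<bar>A$_$j\<bar>"] by (meson abs_ge_zero order_trans)

lemma mnorm_inf_pos: "A \<noteq> 0 \<Longrightarrow> 0 < mnorm_inf A"
proof -
  assume "A \<noteq> 0"
  then obtain i j where "A$i$j \<noteq> 0"
    by (auto simp: vec_eq_iff)
  then have "0 < \<bar>A$i$j\<bar>"
    by simp
  also have "\<dots> \<le> (\<Sum>l\<in>UNIV. \<bar>A$i$l\<bar>)"
    by (rule member_le_sum) auto
  finally show ?thesis
    using row_norm_le_mnorm_inf[of A i] by linarith
qed

lemma mnorm_inf_scaleR: "mnorm_inf (c *\<^sub>R A) = \<bar>c\<bar> * mnorm_inf A"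
proof -
  have "mono ((*) \<bar>c\<bar>)"
    by (simp add: mono_def mult_left_mono)
  then show ?thesis
    unfolding mnorm_inf_def
    by (subst mono_Max_commute) (auto simp: abs_mult sum_distrib_left image_image)
qed

lemma infnorm_mult_vec_le: "infnorm (A *v x) \<le> mnorm_inf A * infnorm x"
proof (rule infnorm_cart_leI)
  fix i
  have "\<bar>(A *v x)$i\<bar> \<le> (\<Sum>j\<in>UNIV. \<bar>A$i$j\<bar> * infnorm x)"
    unfolding matrix_vector_mult_def
    by (auto intro!: order_trans[OF sum_abs] sum_mono
        simp: abs_mult mult_left_mono component_le_infnorm_cart)
  also have "\<dots> \<le> mnorm_inf A * infnorm x"
    by (simp add: sum_distrib_right[symmetric] mult_right_mono row_norm_le_mnorm_inf infnorm_pos_le)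
  finally show "\<bar>(A *v x)$i\<bar> \<le> mnorm_inf A * infnorm x" .
qed

section \<open>Stochastic matrices and mixing\<close>

lemma stochastic_mat_1: "stochastic (mat 1)"
  by (simp add: stochastic_def mat_def sum.delta)

lemma stochastic_mult:
  assumes "stochastic A" "stochastic B"
  shows "stochastic (A ** B)"
proof -
  have "(\<Sum>j\<in>UNIV. (A ** B)$i$j) = (\<Sum>k\<in>UNIV. A$i$k * (\<Sum>j\<in>UNIV. B$k$j))" for i
    by (simp add: matrix_matrix_mult_def sum_distrib_left) (rule sum.swap)
  with assms show ?thesis
    by (auto simp: stochastic_def matrix_matrix_mult_def intro!: sum_nonneg)
qed

lemma stochastic_mpow: "stochastic A \<Longrightarrow> stochastic (mpow A k)"
  by (induction k) (simp_all add: mpow_Suc stochastic_mat_1 stochastic_mult)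

lemma stochastic_lazy: "stochastic P \<Longrightarrow> stochastic (lazy P)"
  by (simp add: stochastic_def lazy_def mat_def sum.distrib sum.delta
      flip: sum_divide_distrib)

lemma lazy_diag_ge: "stochastic P \<Longrightarrow> 1/2 \<le> lazy P $ i $ i"
  by (simp add: stochastic_def lazy_def mat_def)

lemma lazy_minus_lazy: "lazy P1 - lazy P2 = (1/2) *\<^sub>R (P1 - P2)"
  by (simp add: lazy_def algebra_simps)

lemma mnorm_inf_stochastic: "stochastic A \<Longrightarrow> mnorm_inf A = 1"
  by (simp add: mnorm_inf_def stochastic_def)

lemma infnorm_stochastic_mult_le: "stochastic A \<Longrightarrow> infnorm (A *v x) \<le> infnorm x"
  using infnorm_mult_vec_le[of A x] by (simp add: mnorm_inf_stochastic)

lemma infnorm_mpow_diff_mult_le: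
  assumes "stochastic A" "stochastic B"
  shows "infnorm (mpow A k *v x - mpow B k *v x) \<le> k * mnorm_inf (A - B) * infnorm x"
proof (induction k)
  case (Suc k)
  have "mpow A (Suc k) *v x - mpow B (Suc k) *v x
      = A *v (mpow A k *v x - mpow B k *v x) + (A - B) *v (mpow B k *v x)"
    by (simp add: mpow_Suc_mult_vec algebra_simps)
  also have "infnorm \<dots> \<le> k * mnorm_inf (A - B) * infnorm x + mnorm_inf (A - B) * infnorm x"
  proof (rule order_trans[OF infnorm_triangle add_mono])
    show "infnorm (A *v (mpow A k *v x - mpow B k *v x)) \<le> k * mnorm_inf (A - B) * infnorm x"
      using infnorm_stochastic_mult_le[OF assms(1)] Suc.IH by (rule order_trans)
    show "infnorm ((A - B) *v (mpow B k *v x)) \<le> mnorm_inf (A - B) * infnorm x"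
      using infnorm_mult_vec_le infnorm_stochastic_mult_le[OF stochastic_mpow[OF assms(2)]]
        mnorm_inf_nonneg by (metis mult_left_mono order_trans)
  qed
  finally show ?case
    by (simp add: algebra_simps)
qed (simp add: infnorm_0)

lemma mixing_paramsD:
  assumes "mixing_params Q \<mu> C \<rho>"
  shows "0 < C" "0 < \<rho>" "\<rho> < 1"
  using assms by (simp_all add: mixing_params_def)

lemma tv_dist_mpow_le:
  assumes "mixing_params Q \<mu> C \<rho>"
  shows "tv_dist (mpow Q k $ i) \<mu> \<le> C * \<rho>^k"
proof -
  have "tv_dist (mpow Q k $ i) \<mu> \<le> (MAX i\<in>UNIV. tv_dist (mpow Q k $ i) \<mu>)"
    by (rule Max_ge) auto
  with assms show ?thesis
    by (simp add: mixing_params_def)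
qed

lemma mixing_params_mono:
  assumes "mixing_params Q \<mu> C \<rho>" "C \<le> C'" "\<rho> \<le> \<rho>'" "\<rho>' < 1"
  shows "mixing_params Q \<mu> C' \<rho>'"
proof -
  have "C * \<rho>^k \<le> C' * \<rho>'^k" for k
    using assms mixing_paramsD[OF assms(1)] by (intro mult_mono power_mono) auto
  with assms show ?thesis
    unfolding mixing_params_def by (auto intro: order_trans)
qed

definition of_real_mat :: "real^'n^'m \<Rightarrow> 'a::real_algebra_1^'n^'m" where
  "of_real_mat A = (\<chi> i j. of_real (A$i$j))"

lemma of_real_mat_real [simp]: "of_real_mat A = (A :: real^'n^'m)"
  by (simp add: of_real_mat_def vec_eq_iff)

lemma of_real_mat_mult: "of_real_mat (A ** B) = of_real_mat A ** of_real_mat B"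
  by (simp add: of_real_mat_def vec_eq_iff matrix_matrix_mult_def)

lemma of_real_mat_mat_1 [simp]: "of_real_mat (mat 1) = mat 1"
  by (simp add: of_real_mat_def vec_eq_iff mat_def)

lemma of_real_mat_mpow_eigenvector:
  fixes v :: "'a::{real_algebra_1,field}^'n"
  assumes "of_real_mat Q *v v = s *s v"
  shows "of_real_mat (mpow Q k) *v v = s^k *s v"
proof (induction k)
  case (Suc k)
  have "of_real_mat (mpow Q (Suc k)) *v v = of_real_mat Q *v (s^k *s v)"
    by (simp add: mpow_Suc_left of_real_mat_mult Suc flip: matrix_vector_mul_assoc)
  also have "\<dots> = s^Suc k *s v"
    by (simp add: vec.scale assms)
  finally show ?case .
qed simp

lemma norm_mult_vec_le_tv_dist:
  fixes v :: "'a::real_normed_field^'n"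
  assumes "(\<Sum>j\<in>UNIV. of_real (\<mu>$j) * v$j) = 0" "\<And>j. norm (v$j) \<le> c"
  shows "norm ((of_real_mat M *v v)$i) \<le> 2 * tv_dist (M$i) \<mu> * c"
proof -
  have "(of_real_mat M *v v)$i = (\<Sum>j\<in>UNIV. of_real (M$i$j - \<mu>$j) * v$j)"
    using assms(1)
    by (simp add: of_real_mat_def matrix_vector_mult_def left_diff_distrib sum_subtractf)
  also have "norm \<dots> \<le> (\<Sum>j\<in>UNIV. \<bar>M$i$j - \<mu>$j\<bar> * c)"
    by (rule order_trans[OF norm_sum sum_mono]) (simp add: norm_mult mult_left_mono assms(2) flip: of_real_diff)
  also have "\<dots> = 2 * tv_dist (M$i) \<mu> * c"
    by (simp add: tv_dist_def sum_distrib_right)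
  finally show ?thesis .
qed

lemma infnorm_mpow_mult_le:
  assumes "mixing_params Q \<mu> C \<rho>" "\<mu> \<bullet> y = 0"
  shows "infnorm (mpow Q k *v y) \<le> 2 * C * \<rho>^k * infnorm y"
proof (rule infnorm_cart_leI)
  fix i
  have "\<bar>(mpow Q k *v y)$i\<bar> \<le> 2 * tv_dist (mpow Q k $ i) \<mu> * infnorm y"
    using norm_mult_vec_le_tv_dist[of \<mu> y "infnorm y" "mpow Q k" i] assms(2)
    by (simp add: inner_vec_def component_le_infnorm_cart)
  also have "\<dots> \<le> 2 * (C * \<rho>^k) * infnorm y"
    using tv_dist_mpow_le[OF assms(1)] by (intro mult_right_mono mult_left_mono infnorm_pos_le) auto
  finally show "\<bar>(mpow Q k *v y)$i\<bar> \<le> 2 * C * \<rho>^k * infnorm y"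
    by (simp add: mult.assoc)
qed

lemma le_if_power_le_geometric:
  fixes a \<rho> B :: real
  assumes "0 < \<rho>" "\<And>k. a^k \<le> B * \<rho>^k"
  shows "a \<le> \<rho>"
proof (rule ccontr)
  assume "\<not> a \<le> \<rho>"
  then have "1 < a / \<rho>"
    using assms(1) by simp
  then obtain k where "B < (a / \<rho>)^k"
    using real_arch_pow by blast
  then have "B * \<rho>^k < a^k"
    using assms(1) by (simp add: power_divide pos_less_divide_eq)
  with assms(2)[of k] show False
    by simp
qed

lemma mixing_eigenvalue_le:
  fixes v :: "'a::real_normed_field^'n"
  assumes mix: "mixing_params Q \<mu> C \<rho>" and eigen: "of_real_mat Q *v v = s *s v"
    and orth: "(\<Sum>j\<in>UNIV. of_real (\<mu>$j) * v$j) = 0" and "v \<noteq> 0"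
  shows "norm s \<le> \<rho>"
proof -
  obtain i where max: "\<And>j. norm (v$j) \<le> norm (v$i)"
  proof -
    have "Max (range (\<lambda>j. norm (v$j))) \<in> range (\<lambda>j. norm (v$j))"
      by (rule Max_in) auto
    then obtain i where i: "Max (range (\<lambda>j. norm (v$j))) = norm (v$i)"
      by blast
    show thesis
      by (rule that[of i]) (simp flip: i)
  qed
  have pos: "norm (v$i) > 0"
  proof (rule ccontr)
    assume "\<not> norm (v$i) > 0"
    then have "v$j = 0" for j
      using max[of j] by simp
    with \<open>v \<noteq> 0\<close> show False
      by (simp add: vec_eq_iff)
  qed
  have "norm s ^ k \<le> 2 * C * \<rho>^k" for k
  proof -
    have "norm s ^ k * norm (v$i) = norm ((of_real_mat (mpow Q k) *v v)$i)"
      by (simp add: of_real_mat_mpow_eigenvector[OF eigen] norm_mult norm_power)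
    also have "\<dots> \<le> 2 * tv_dist (mpow Q k $ i) \<mu> * norm (v$i)"
      by (rule norm_mult_vec_le_tv_dist[OF orth max])
    also have "\<dots> \<le> 2 * C * \<rho>^k * norm (v$i)"
      using tv_dist_mpow_le[OF mix] by (intro mult_right_mono) auto
    finally show ?thesis
      using pos by simp
  qed
  then show ?thesis
    by (rule le_if_power_le_geometric[OF mixing_paramsD(2)[OF mix]])
qed

section \<open>The Poisson series\<close>

lemma summable_mpow_mult:
  assumes "mixing_params Q \<mu> C \<rho>" "\<mu> \<bullet> y = 0"
  shows "summable (\<lambda>k. mpow Q k *v y)"
proof (rule summable_infnorm_comparison)
  show "infnorm (mpow Q k *v y) \<le> 2 * C * infnorm y * \<rho>^k" for k
    using infnorm_mpow_mult_le[OF assms, of k] by (simp only: mult_ac)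
  show "summable (\<lambda>k. 2 * C * infnorm y * \<rho>^k)"
    using mixing_paramsD[OF assms(1)] by (intro summable_mult summable_geometric) simp
qed

lemma infnorm_suminf_mpow_mult_le:
  assumes "mixing_params Q \<mu> C \<rho>" "\<mu> \<bullet> y = 0"
  shows "infnorm (\<Sum>k. mpow Q k *v y) \<le> 2 * C / (1 - \<rho>) * infnorm y"
proof -
  have "infnorm (\<Sum>k. mpow Q k *v y) \<le> (\<Sum>k. 2 * C * infnorm y * \<rho>^k)"
  proof (rule infnorm_suminf_le)
    show "infnorm (mpow Q k *v y) \<le> 2 * C * infnorm y * \<rho>^k" for k
      using infnorm_mpow_mult_le[OF assms, of k] by (simp only: mult_ac)
    show "summable (\<lambda>k. 2 * C * infnorm y * \<rho>^k)"
      using mixing_paramsD[OF assms(1)] by (intro summable_mult summable_geometric) simp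
  qed
  also have "\<dots> = 2 * C / (1 - \<rho>) * infnorm y"
    using mixing_paramsD[OF assms(1)] by (simp add: suminf_mult suminf_geometric)
  finally show ?thesis .
qed

lemma mat_1_minus_mult_suminf_mpow:
  assumes "summable (\<lambda>k. mpow Q k *v y)"
  shows "(mat 1 - Q) *v (\<Sum>k. mpow Q k *v y) = y"
proof -
  let ?f = "\<lambda>k. mpow Q k *v y"
  have "(mat 1 - Q) *v (\<Sum>k. ?f k) = (\<Sum>k. (mat 1 - Q) *v ?f k)"
    by (rule bounded_linear.suminf[OF matrix_vector_mul_bounded_linear assms])
  also have "\<dots> = (\<Sum>k. ?f k - ?f (Suc k))"
    by (simp add: mpow_Suc_mult_vec matrix_vector_mult_diff_rdistrib)
  also have "\<dots> = y"
    using telescope_sums'[OF summable_LIMSEQ_zero[OF assms]] by (simp add: sums_iff)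
  finally show ?thesis .
qed

lemma lazy_poisson_solution:
  assumes "summable (\<lambda>k. mpow (lazy P) k *v y)"
  shows "(mat 1 - P) *v ((\<Sum>k. mpow (lazy P) k *v y) /\<^sub>R 2) = y"
proof -
  have "mat 1 - P = 2 *\<^sub>R (mat 1 - lazy P)"
    by (simp add: lazy_def vec_eq_iff mat_def field_simps)
  then show ?thesis
    using mat_1_minus_mult_suminf_mpow[OF assms]
    by (simp add: matrix_vector_mult_scaleR flip: scaleR_matrix_vector_assoc)
qed

lemma lazy_poisson_series:
  assumes "mixing_params (lazy P) \<mu> C \<rho>" "\<mu> \<bullet> y = 0"
  shows "summable (\<lambda>k. mpow (lazy P) k *v y)
    \<and> (mat 1 - P) *v ((\<Sum>k. mpow (lazy P) k *v y) /\<^sub>R 2) = y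
    \<and> infnorm ((\<Sum>k. mpow (lazy P) k *v y) /\<^sub>R 2) \<le> C / (1 - \<rho>) * infnorm y"
  using summable_mpow_mult[OF assms] lazy_poisson_solution[OF summable_mpow_mult[OF assms]]
    infnorm_suminf_mpow_mult_le[OF assms]
  by (simp add: infnorm_mul mult_ac)

section \<open>Comparing the series of two chains\<close>

lemma suminf_diff_split:
  fixes f g :: "nat \<Rightarrow> 'a::real_normed_vector"
  assumes "summable f" "summable g"
  shows "suminf f - suminf g = (\<Sum>k. f (k + N) - g (k + N)) + (\<Sum>k<N. f k - g k)"
  using suminf_split_initial_segment[OF summable_diff[OF assms], of N] suminf_diff[OF assms] by simp

lemma infnorm_mpow_mult_diff_le:
  assumes "stochastic A" "stochastic B"
  shows "infnorm (mpow A k *v y1 - mpow B k *v y2)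
    \<le> infnorm (y1 - y2) + k * mnorm_inf (A - B) / 2 * (infnorm y1 + infnorm y2)"
proof -
  let ?M = "mpow A k" and ?N = "mpow B k"
  have split: "?M *v y1 - ?N *v y2
    = (1/2) *\<^sub>R (?M *v (y1 - y2) + ?N *v (y1 - y2)) + (1/2) *\<^sub>R (?M *v (y1 + y2) - ?N *v (y1 + y2))"
    by (simp add: algebra_simps)
  have "infnorm (?M *v (y1 - y2)) \<le> infnorm (y1 - y2)" "infnorm (?N *v (y1 - y2)) \<le> infnorm (y1 - y2)"
    using assms by (simp_all add: infnorm_stochastic_mult_le stochastic_mpow)
  then have "infnorm (?M *v (y1 - y2) + ?N *v (y1 - y2)) \<le> 2 * infnorm (y1 - y2)"
    using infnorm_triangle[of "?M *v (y1 - y2)" "?N *v (y1 - y2)"] by linarith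
  moreover have "infnorm (?M *v (y1 + y2) - ?N *v (y1 + y2))
      \<le> k * mnorm_inf (A - B) * (infnorm y1 + infnorm y2)"
    using infnorm_mpow_diff_mult_le[OF assms, of k "y1 + y2"]
    by (rule order_trans) (simp add: infnorm_triangle mnorm_inf_nonneg mult_left_mono)
  moreover have "infnorm (?M *v y1 - ?N *v y2)
      \<le> infnorm (?M *v (y1 - y2) + ?N *v (y1 - y2)) / 2 + infnorm (?M *v (y1 + y2) - ?N *v (y1 + y2)) / 2"
    unfolding split by (rule order_trans[OF infnorm_triangle]) (simp add: infnorm_mul)
  ultimately show ?thesis
    by simp
qed

lemma sum_lessThan_real: "(\<Sum>k<N. real k) = real N * (real N - 1) / 2"
  by (induction N) (auto simp: field_simps)

lemma infnorm_sum_mpow_mult_diff_le: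
  assumes "stochastic A" "stochastic B"
  shows "infnorm (\<Sum>k<N. mpow A k *v y1 - mpow B k *v y2)
    \<le> real N * infnorm (y1 - y2) + real N * (real N - 1) / 4 * mnorm_inf (A - B) * (infnorm y1 + infnorm y2)"
proof -
  define c where "c = mnorm_inf (A - B) / 2 * (infnorm y1 + infnorm y2)"
  have "infnorm (\<Sum>k<N. mpow A k *v y1 - mpow B k *v y2) \<le> (\<Sum>k<N. infnorm (y1 - y2) + real k * c)"
    using infnorm_mpow_mult_diff_le[OF assms] unfolding c_def
    by (intro order_trans[OF infnorm_sum_le sum_mono]) (simp add: mult.assoc)
  also have "\<dots> = real N * infnorm (y1 - y2) + (\<Sum>k<N. real k) * c"
    by (simp add: sum.distrib sum_distrib_right)
  also have "\<dots> = real N * infnorm (y1 - y2) + real N * (real N - 1) / 4 * mnorm_inf (A - B) * (infnorm y1 + infnorm y2)"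
    by (simp add: sum_lessThan_real c_def)
  finally show ?thesis .
qed

lemma infnorm_suminf_mpow_tail_le:
  assumes mix1: "mixing_params Q1 \<mu>1 C \<rho>" and mix2: "mixing_params Q2 \<mu>2 C \<rho>"
    and "\<mu>1 \<bullet> y1 = 0" "\<mu>2 \<bullet> y2 = 0"
  shows "infnorm (\<Sum>k. mpow Q1 (k + N) *v y1 - mpow Q2 (k + N) *v y2)
    \<le> 2 * C * \<rho>^N / (1 - \<rho>) * (infnorm y1 + infnorm y2)"
proof -
  let ?c = "2 * C * \<rho>^N * (infnorm y1 + infnorm y2)"
  have "infnorm (\<Sum>k. mpow Q1 (k + N) *v y1 - mpow Q2 (k + N) *v y2) \<le> (\<Sum>k. ?c * \<rho>^k)"
  proof (rule infnorm_suminf_le)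
    show "infnorm (mpow Q1 (k + N) *v y1 - mpow Q2 (k + N) *v y2) \<le> ?c * \<rho>^k" for k
    proof -
      have "infnorm (mpow Q1 (k + N) *v y1 - mpow Q2 (k + N) *v y2)
          \<le> infnorm (mpow Q1 (k + N) *v y1) + infnorm (mpow Q2 (k + N) *v y2)"
        using infnorm_triangle[of "mpow Q1 (k + N) *v y1" "- (mpow Q2 (k + N) *v y2)"]
        by (simp add: infnorm_neg)
      also have "\<dots> \<le> 2 * C * \<rho>^(k + N) * infnorm y1 + 2 * C * \<rho>^(k + N) * infnorm y2"
        by (intro add_mono infnorm_mpow_mult_le[OF mix1 assms(3)] infnorm_mpow_mult_le[OF mix2 assms(4)])
      also have "\<dots> = ?c * \<rho>^k"
        by (simp add: power_add algebra_simps)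
      finally show ?thesis .
    qed
    show "summable (\<lambda>k. ?c * \<rho>^k)"
      using mixing_paramsD[OF mix1] by (intro summable_mult summable_geometric) simp
  qed
  also have "\<dots> = 2 * C * \<rho>^N / (1 - \<rho>) * (infnorm y1 + infnorm y2)"
    using mixing_paramsD[OF mix1] by (simp add: suminf_mult suminf_geometric)
  finally show ?thesis .
qed

lemma abs_diff_component_le_tv_dist:
  assumes "(\<Sum>j\<in>UNIV. p$j) = (\<Sum>j\<in>UNIV. q$j)"
  shows "\<bar>p$k - q$k\<bar> \<le> tv_dist p q"
proof -
  have "p$k - q$k = - (\<Sum>j\<in>UNIV - {k}. p$j - q$j)"
    using assms sum.remove[of UNIV k "\<lambda>j. p$j - q$j"] by (simp add: sum_subtractf)
  then have "\<bar>p$k - q$k\<bar> \<le> (\<Sum>j\<in>UNIV - {k}. \<bar>p$j - q$j\<bar>)"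
    by (simp only: abs_minus_cancel sum_abs)
  moreover have "(\<Sum>j\<in>UNIV. \<bar>p$j - q$j\<bar>) = \<bar>p$k - q$k\<bar> + (\<Sum>j\<in>UNIV - {k}. \<bar>p$j - q$j\<bar>)"
    by (rule sum.remove) auto
  ultimately show ?thesis
    unfolding tv_dist_def by linarith
qed

lemma lazy_entry_ge:
  assumes "stochastic P" "stationary_dist P \<mu>" "mixing_params (lazy P) \<mu> C \<rho>"
  shows "1/2 - 2 * C * \<rho> \<le> lazy P $ j $ k"
proof -
  have "\<bar>lazy P $ i $ k - \<mu>$k\<bar> \<le> C * \<rho>" for i
  proof -
    have "(\<Sum>l\<in>UNIV. lazy P $ i $ l) = (\<Sum>l\<in>UNIV. \<mu>$l)"
      using stochastic_lazy[OF assms(1)] assms(2) by (simp add: stochastic_def stationary_dist_def)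
    then have "\<bar>lazy P $ i $ k - \<mu>$k\<bar> \<le> tv_dist (lazy P $ i) \<mu>"
      by (rule abs_diff_component_le_tv_dist)
    also have "\<dots> \<le> C * \<rho>"
      using tv_dist_mpow_le[OF assms(3), of 1 i] by (simp add: mpow_Suc)
    finally show ?thesis .
  qed
  from this[of j] this[of k] show ?thesis
    using lazy_diag_ge[OF assms(1), of k] by linarith
qed

lemma row_l1_dist_le:
  fixes a b :: "real^'n"
  assumes "(\<Sum>j\<in>UNIV. a$j) = 1" "(\<Sum>j\<in>UNIV. b$j) = 1" "\<And>j. 0 \<le> a$j" "\<And>j. 0 \<le> b$j"
  shows "(\<Sum>j\<in>UNIV. \<bar>a$j - b$j\<bar>) \<le> 2 - 2 * min (a$k) (b$k)"
proof -
  have "\<bar>a$j - b$j\<bar> = a$j + b$j - 2 * min (a$j) (b$j)" for j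
    by (simp add: min_def)
  then have "(\<Sum>j\<in>UNIV. \<bar>a$j - b$j\<bar>) = 2 - 2 * (\<Sum>j\<in>UNIV. min (a$j) (b$j))"
    by (simp add: sum.distrib sum_subtractf assms(1,2) flip: sum_distrib_left)
  moreover have "min (a$k) (b$k) \<le> (\<Sum>j\<in>UNIV. min (a$j) (b$j))"
    by (rule member_le_sum) (use assms(3,4) in auto)
  ultimately show ?thesis
    by linarith
qed

lemma ex_neq_if_card_ge_2:
  assumes "2 \<le> CARD('n)"
  obtains k :: "'n::finite" where "k \<noteq> j"
proof -
  have "CARD('n) \<noteq> card {j}"
    using assms by simp
  then have "UNIV \<noteq> {j}"
    by metis
  then show thesis
    using that by blast
qed

lemma mnorm_inf_diff_le_mixing:
  assumes st1: "stochastic P1" "stationary_dist P1 \<mu>1" "mixing_params (lazy P1) \<mu>1 C \<rho>"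
    and st2: "stochastic P2" "stationary_dist P2 \<mu>2" "mixing_params (lazy P2) \<mu>2 C \<rho>"
    and "2 \<le> CARD('n)"
  shows "mnorm_inf (P1 - P2 :: real^'n^'n) \<le> 8 * C * \<rho>"
proof (rule mnorm_inf_leI)
  fix j :: 'n
  obtain k where "k \<noteq> j"
    using ex_neq_if_card_ge_2[OF \<open>2 \<le> CARD('n)\<close>] .
  then have "P1$j$k = 2 * lazy P1 $ j $ k" "P2$j$k = 2 * lazy P2 $ j $ k"
    by (simp_all add: lazy_def mat_def)
  then have "1 - 4 * C * \<rho> \<le> min (P1$j$k) (P2$j$k)"
    using lazy_entry_ge[OF st1, of j k] lazy_entry_ge[OF st2, of j k] by simp
  moreover have "(\<Sum>l\<in>UNIV. \<bar>P1$j$l - P2$j$l\<bar>) \<le> 2 - 2 * min (P1$j$k) (P2$j$k)"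
    using st1(1) st2(1) by (intro row_l1_dist_le) (auto simp: stochastic_def)
  ultimately show "(\<Sum>l\<in>UNIV. \<bar>(P1 - P2)$j$l\<bar>) \<le> 8 * C * \<rho>"
    by (simp only: vector_minus_component)
qed

lemma card_ge_2_if_stochastic_neq:
  assumes "stochastic P1" "stochastic P2" "P1 \<noteq> (P2 :: real^'n^'n)"
  shows "2 \<le> CARD('n)"
proof (rule ccontr)
  assume "\<not> 2 \<le> CARD('n)"
  then have single: "i = j" for i j :: 'n
    using card_le_Suc0_iff_eq[of "UNIV :: 'n set"] by auto
  have "P$i$j = 1" if "stochastic P" for P :: "real^'n^'n" and i j
  proof -
    have univ: "UNIV = {i}"
      using single by blast
    have "(\<Sum>l\<in>UNIV. P$i$l) = P$i$i"
      unfolding univ by simp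
    with that show ?thesis
      using single[of i j] by (simp add: stochastic_def)
  qed
  with assms show False
    by (simp add: vec_eq_iff)
qed

section \<open>Characteristic polynomial and trace\<close>

definition charmat :: "'a::comm_ring_1^'n^'n \<Rightarrow> 'a poly^'n^'n" where
  "charmat A = (\<chi> i j. (if i = j then [:0, 1:] else 0) - [:A$i$j:])"

definition charpoly :: "'a::comm_ring_1^'n^'n \<Rightarrow> 'a poly" where
  "charpoly A = det (charmat A)"

lemma poly_det: "poly (det M) x = det (\<chi> i j. poly (M$i$j) x)"
  by (simp add: det_def poly_sum poly_prod)

lemma poly_charpoly: "poly (charpoly A) s = det (mat s - A)"
  unfolding charpoly_def poly_det by (rule arg_cong[where f = det]) (simp add: charmat_def vec_eq_iff mat_def)

lemma eigenvector_if_charpoly_root: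
  fixes A :: "'a::field^'n^'n"
  assumes "poly (charpoly A) s = 0"
  obtains v where "v \<noteq> 0" "A *v v = s *s v"
proof -
  have "\<not> inj ((*v) (mat s - A))"
    using det_nz_iff_inj_gen[of "(*v) (mat s - A)"] assms
    by (simp add: poly_charpoly matrix_vector_mul_linear_gen)
  then obtain x y where "x \<noteq> y" "(mat s - A) *v x = (mat s - A) *v y"
    unfolding inj_def by blast
  then have "x - y \<noteq> 0" "(mat s - A) *v (x - y) = 0"
    by (simp_all add: matrix_vector_mult_diff_distrib)
  moreover have "(mat s - A) *v w = s *s w - A *v w" for w
  proof -
    have "mat s *v w = s *s w"
      by (simp add: vec_eq_iff mat_def matrix_vector_mult_def if_distrib if_distribR cong: if_cong)
    then show ?thesis
      by (simp add: matrix_vector_mult_diff_rdistrib)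
  qed
  ultimately show thesis
    by (intro that[of "x - y"]) simp_all
qed

lemma degree_prod_monic_linear:
  fixes c :: "'i \<Rightarrow> 'a::idom"
  shows "finite I \<Longrightarrow> degree (\<Prod>i\<in>I. [:- c i, 1:]) = card I"
  by (simp add: degree_prod_sum_eq)

lemma coeff_card_prod_monic_linear:
  fixes c :: "'i \<Rightarrow> 'a::idom"
  shows "finite I \<Longrightarrow> coeff (\<Prod>i\<in>I. [:- c i, 1:]) (card I) = 1"
  using lead_coeff_prod[of "\<lambda>i. [:- c i, 1:]" I] by (simp add: degree_prod_monic_linear)

lemma coeff_pred_card_prod_monic_linear:
  fixes c :: "'i \<Rightarrow> 'a::idom"
  assumes "finite I" "I \<noteq> {}"
  shows "coeff (\<Prod>i\<in>I. [:- c i, 1:]) (card I - 1) = - (\<Sum>i\<in>I. c i)"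
  using assms
proof (induction I rule: finite_ne_induct)
  case (insert x F)
  let ?p = "\<Prod>i\<in>F. [:- c i, 1:]"
  obtain n where n: "card F = Suc n"
    using insert.hyps by (metis card_gt_0_iff gr0_implies_Suc)
  have "(\<Prod>i\<in>insert x F. [:- c i, 1:]) = pCons 0 ?p - smult (c x) ?p"
    using insert.hyps by (simp add: algebra_simps)
  moreover have "card (insert x F) - 1 = Suc n"
    using insert.hyps n by simp
  ultimately show ?case
    using insert.IH insert.hyps coeff_card_prod_monic_linear[of F c] n by simp
qed simp

lemma card_fixpoints_add_2_le:
  assumes "p permutes (UNIV :: 'n::finite set)" "p \<noteq> id"
  shows "card {i. p i = i} + 2 \<le> CARD('n)"
proof -
  obtain i where i: "p i \<noteq> i"
    using assms(2) by (auto simp: fun_eq_iff)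
  then have "p (p i) \<noteq> p i"
    using permutes_inj[OF assms(1)] by (metis injD)
  with i have "card {k. p k = k} \<le> card (UNIV - {i, p i})"
    by (intro card_mono) auto
  moreover have "card {i, p i} = 2"
    using i by simp
  moreover have "card {i, p i} \<le> CARD('n)"
    by (rule card_mono) simp_all
  ultimately show ?thesis
    by (simp add: card_Diff_subset)
qed

lemma degree_prod_charmat_le:
  assumes "p permutes (UNIV :: 'n::finite set)" "p \<noteq> id"
  shows "degree (\<Prod>i\<in>UNIV. charmat (A :: 'a::idom^'n^'n) $ i $ p i) + 2 \<le> CARD('n)"
proof -
  have "degree (charmat A $ i $ p i) \<le> (if p i = i then 1 else 0)" for i
    by (simp add: charmat_def)
  then have "degree (\<Prod>i\<in>UNIV. charmat A $ i $ p i) \<le> (\<Sum>i\<in>UNIV. if p i = i then 1 else 0)"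
    by (auto intro!: order_trans[OF degree_prod_sum_le] sum_mono)
  then show ?thesis
    using card_fixpoints_add_2_le[OF assms] by (simp add: sum.If_cases)
qed

lemma charpoly_coeffs:
  fixes A :: "'a::idom^'n^'n"
  shows "degree (charpoly A) = CARD('n)"
    and "coeff (charpoly A) CARD('n) = 1"
    and "coeff (charpoly A) (CARD('n) - 1) = - (\<Sum>i\<in>UNIV. A$i$i)"
proof -
  define T where "T = (\<lambda>p. of_int (sign p) * (\<Prod>i\<in>UNIV. charmat A $ i $ p i))"
  let ?P = "{p. p permutes (UNIV :: 'n set)}"
  have "charpoly A = T id + (\<Sum>p\<in>?P - {id}. T p)"
    unfolding charpoly_def det_def T_def
    by (rule sum.remove) (simp_all add: finite_permutations permutes_id)
  moreover have "T id = (\<Prod>i\<in>UNIV. [:- A$i$i, 1:])"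
    by (simp add: T_def charmat_def)
  moreover have "coeff (\<Sum>p\<in>?P - {id}. T p) m = 0" if "CARD('n) - 1 \<le> m" for m
  proof -
    have "coeff (T p) m = 0" if "p \<in> ?P - {id}" for p
    proof (rule coeff_eq_0)
      have "degree (T p) \<le> degree (\<Prod>i\<in>UNIV. charmat A $ i $ p i)"
        unfolding T_def of_int_poly by (simp add: degree_smult_le)
      then show "degree (T p) < m"
        using degree_prod_charmat_le[of p A] that \<open>CARD('n) - 1 \<le> m\<close> by simp
    qed
    then show ?thesis
      by (simp add: coeff_sum)
  qed
  ultimately have coeff_charpoly:
    "coeff (charpoly A) m = coeff (\<Prod>i\<in>UNIV. [:- A$i$i, 1:]) m" if "CARD('n) - 1 \<le> m" for m
    using that by simp
  then show "coeff (charpoly A) CARD('n) = 1"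
    and "coeff (charpoly A) (CARD('n) - 1) = - (\<Sum>i\<in>UNIV. A$i$i)"
    using coeff_card_prod_monic_linear[of UNIV "\<lambda>i. A$i$i"]
      coeff_pred_card_prod_monic_linear[of UNIV "\<lambda>i. A$i$i"] by simp_all
  have "degree (charpoly A) \<le> CARD('n)"
    using coeff_charpoly degree_prod_monic_linear[of UNIV "\<lambda>i. A$i$i"]
    by (intro degree_le) (simp add: coeff_eq_0)
  moreover have "CARD('n) \<le> degree (charpoly A)"
    by (rule le_degree) (simp add: \<open>coeff (charpoly A) CARD('n) = 1\<close>)
  ultimately show "degree (charpoly A) = CARD('n)"
    by (rule antisym)
qed

lemma trace_eq_sum_charpoly_roots:
  fixes A :: "complex^'n^'n"
  obtains r where "\<And>i. i < CARD('n) \<Longrightarrow> poly (charpoly A) (r i) = 0"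
    and "(\<Sum>i\<in>UNIV. A$i$i) = (\<Sum>i<CARD('n). r i)"
proof -
  obtain r where r: "smult (lead_coeff (charpoly A)) (\<Prod>i<degree (charpoly A). [:- r i, 1:]) = charpoly A"
    using complex_poly_decompose' by blast
  then have factored: "charpoly A = (\<Prod>i<CARD('n). [:- r i, 1:])"
    by (simp add: charpoly_coeffs(1,2))
  show thesis
  proof
    show "poly (charpoly A) (r i) = 0" if "i < CARD('n)" for i
      unfolding factored poly_prod using that by (auto intro: prod_zero)
    have "0 < CARD('n)"
      by (simp add: card_gt_0_iff)
    then have "{..<CARD('n)} \<noteq> {}"
      by (metis lessThan_iff empty_iff)
    then have "- (\<Sum>i\<in>UNIV. A$i$i) = - (\<Sum>i<CARD('n). r i)"
      using charpoly_coeffs(3)[of A] coeff_pred_card_prod_monic_linear[of "{..<CARD('n)}" r]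
      by (simp add: factored)
    then show "(\<Sum>i\<in>UNIV. A$i$i) = (\<Sum>i<CARD('n). r i)"
      by simp
  qed
qed

lemma abs_trace_le_if_eigenvalues_le:
  fixes Q :: "real^'n^'n" and \<rho> :: real
  assumes "\<And>s v. v \<noteq> 0 \<Longrightarrow> of_real_mat Q *v v = s *s v \<Longrightarrow> cmod s \<le> \<rho>"
  shows "\<bar>\<Sum>i\<in>UNIV. Q$i$i\<bar> \<le> CARD('n) * \<rho>"
proof -
  obtain r where roots: "\<And>i. i < CARD('n) \<Longrightarrow> poly (charpoly (of_real_mat Q :: complex^'n^'n)) (r i) = 0"
    and trace: "(\<Sum>i\<in>UNIV. (of_real_mat Q :: complex^'n^'n)$i$i) = (\<Sum>i<CARD('n). r i)"
    using trace_eq_sum_charpoly_roots[of "of_real_mat Q"] by blast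
  have "cmod (r i) \<le> \<rho>" if "i < CARD('n)" for i
    using eigenvector_if_charpoly_root[OF roots[OF that]] assms by metis
  then have "cmod (\<Sum>i<CARD('n). r i) \<le> CARD('n) * \<rho>"
    using norm_sum[of r "{..<CARD('n)}"] sum_mono[of "{..<CARD('n)}" "\<lambda>i. cmod (r i)" "\<lambda>_. \<rho>"]
    by simp
  moreover have "cmod (\<Sum>i\<in>UNIV. (of_real_mat Q :: complex^'n^'n)$i$i) = \<bar>\<Sum>i\<in>UNIV. Q$i$i\<bar>"
    by (simp add: of_real_mat_def flip: of_real_sum)
  ultimately show ?thesis
    by (simp add: trace)
qed

section \<open>A lower bound on the mixing rate\<close>

lemma stationary_dist_lazy:
  assumes "stationary_dist P \<mu>"
  shows "stationary_dist (lazy P) \<mu>"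
proof -
  have "\<mu> v* lazy P = (1/2) *\<^sub>R (\<mu> v* P + \<mu> v* mat 1)"
    by (simp add: lazy_def vec_eq_iff vector_matrix_mult_def sum.distrib sum_distrib_left algebra_simps)
  with assms show ?thesis
    by (simp add: stationary_dist_def vector_matrix_mul_rid)
qed

lemma sum_stationary_mult_vec:
  fixes v :: "'a::real_algebra_1^'n"
  assumes "stationary_dist Q \<mu>"
  shows "(\<Sum>i\<in>UNIV. of_real (\<mu>$i) * (of_real_mat Q *v v)$i) = (\<Sum>j\<in>UNIV. of_real (\<mu>$j) * v$j)"
proof -
  have "(\<Sum>i\<in>UNIV. \<mu>$i * Q$i$j) = \<mu>$j" for j
    using assms by (simp add: stationary_dist_def vec_eq_iff vector_matrix_mult_def mult.commute)
  then have "(\<Sum>i\<in>UNIV. of_real (\<mu>$i * Q$i$j) :: 'a) = of_real (\<mu>$j)" for j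
    by (simp only: of_real_sum[symmetric])
  then have "(\<Sum>j\<in>UNIV. of_real (\<mu>$j) * v$j) = (\<Sum>j\<in>UNIV. (\<Sum>i\<in>UNIV. of_real (\<mu>$i * Q$i$j)) * v$j)"
    by simp
  also have "\<dots> = (\<Sum>i\<in>UNIV. \<Sum>j\<in>UNIV. of_real (\<mu>$i * Q$i$j) * v$j)"
    unfolding sum_distrib_right by (rule sum.swap)
  also have "\<dots> = (\<Sum>i\<in>UNIV. of_real (\<mu>$i) * (of_real_mat Q *v v)$i)"
    by (simp only: of_real_mult of_real_mat_def matrix_vector_mult_def vec_lambda_beta
        sum_distrib_left mult.assoc)
  finally show ?thesis ..
qed

(* Subtracting the limit matrix 1 mu^T removes the eigenvalue 1: an eigenvector for a
   nonzero eigenvalue is annihilated by mu^T, so it is an eigenvector of Q orthogonal to mu. *)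
lemma deflated_eigenvalue_le:
  fixes v :: "'a::real_normed_field^'n"
  assumes stat: "stationary_dist Q \<mu>" and mix: "mixing_params Q \<mu> C \<rho>"
    and eigen: "of_real_mat (Q - (\<chi> i j. \<mu>$j)) *v v = s *s v" and "v \<noteq> 0"
  shows "norm s \<le> \<rho>"
proof -
  define c where "c = (\<Sum>j\<in>UNIV. of_real (\<mu>$j) * v$j)"
  have "(of_real_mat (Q - (\<chi> i j. \<mu>$j)) *v v)$i = (of_real_mat Q *v v)$i - c" for i
    by (simp add: of_real_mat_def matrix_vector_mult_def c_def left_diff_distrib sum_subtractf)
  then have Qv: "(of_real_mat Q *v v)$i = s * v$i + c" for i
    using eigen by (metis diff_eq_eq vector_smult_component)
  have "c = (\<Sum>i\<in>UNIV. of_real (\<mu>$i) * (of_real_mat Q *v v)$i)"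
    unfolding c_def using stat by (rule sum_stationary_mult_vec[symmetric])
  also have "\<dots> = s * (\<Sum>i\<in>UNIV. of_real (\<mu>$i) * v$i) + (\<Sum>i\<in>UNIV. of_real (\<mu>$i)) * c"
    by (simp add: Qv distrib_left sum.distrib sum_distrib_left sum_distrib_right mult.left_commute)
  also have "\<dots> = s * c + c"
    using stat by (simp add: c_def stationary_dist_def flip: of_real_sum)
  finally have "s * c = 0"
    by simp
  then consider "s = 0" | "c = 0"
    by auto
  then show ?thesis
  proof cases
    case 1
    then show ?thesis
      using mixing_paramsD(2)[OF mix] by simp
  next
    case 2
    show ?thesis
    proof (rule mixing_eigenvalue_le[OF mix _ _ \<open>v \<noteq> 0\<close>])
      show "of_real_mat Q *v v = s *s v"
        using Qv 2 by (simp add: vec_eq_iff)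
      show "(\<Sum>j\<in>UNIV. of_real (\<mu>$j) * v$j) = 0"
        using 2 by (simp add: c_def)
    qed
  qed
qed

lemma mixing_rate_ge:
  fixes P :: "real^'n^'n"
  assumes "stochastic P" "stationary_dist P \<mu>" "mixing_params (lazy P) \<mu> C \<rho>"
  shows "real CARD('n) / 2 - 1 \<le> real CARD('n) * \<rho>"
proof -
  let ?Q = "lazy P - (\<chi> i j. \<mu>$j)"
  have "\<bar>\<Sum>i\<in>UNIV. ?Q$i$i\<bar> \<le> CARD('n) * \<rho>"
  proof (rule abs_trace_le_if_eigenvalues_le)
    fix s :: complex and v
    assume "v \<noteq> 0" "of_real_mat ?Q *v v = s *s v"
    then show "cmod s \<le> \<rho>"
      using deflated_eigenvalue_le[OF stationary_dist_lazy[OF assms(2)] assms(3)] by blast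
  qed
  moreover have "(\<Sum>i\<in>UNIV. ?Q$i$i) = (\<Sum>i\<in>UNIV. lazy P $ i $ i) - 1"
    using assms(2) by (simp add: sum_subtractf stationary_dist_def)
  moreover have "CARD('n) / 2 \<le> (\<Sum>i\<in>UNIV. lazy P $ i $ i)"
    using sum_mono[of UNIV "\<lambda>_. 1/2" "\<lambda>i. lazy P $ i $ i"] lazy_diag_ge[OF assms(1)] by simp
  ultimately show ?thesis
    by linarith
qed

lemma mixing_const_ge_half:
  fixes \<mu> :: "real^'n"
  assumes "\<forall>i. 0 \<le> \<mu>$i" "(\<Sum>i\<in>UNIV. \<mu>$i) = 1" "mixing_params Q \<mu> C \<rho>" "2 \<le> CARD('n)"
  shows "1/2 \<le> C"
proof -
  have tv: "1 - \<mu>$i \<le> C" for i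
  proof -
    have rest: "(\<Sum>j\<in>UNIV - {i}. \<mu>$j) = 1 - \<mu>$i"
      using assms(2) sum.remove[of UNIV i "\<lambda>j. \<mu>$j"] by simp
    moreover have "0 \<le> (\<Sum>j\<in>UNIV - {i}. \<mu>$j)"
      using assms(1) by (simp add: sum_nonneg)
    moreover have "tv_dist (mat 1 $ i) \<mu> = (\<bar>1 - \<mu>$i\<bar> + (\<Sum>j\<in>UNIV - {i}. \<mu>$j)) / 2"
      using assms(1) sum.remove[of UNIV i "\<lambda>j. \<bar>(mat 1 $ i :: real^'n)$j - \<mu>$j\<bar>"]
      by (simp add: tv_dist_def mat_def)
    ultimately have "tv_dist (mat 1 $ i) \<mu> = 1 - \<mu>$i"
      by simp
    then show ?thesis
      using tv_dist_mpow_le[OF assms(3), of 0 i] by simp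
  qed
  obtain i j :: 'n where "i \<noteq> j"
    using ex_neq_if_card_ge_2[OF assms(4)] by metis
  then have "\<mu>$i + \<mu>$j \<le> 1"
    using assms(1,2) sum_mono2[of UNIV "{i, j}" "\<lambda>k. \<mu>$k"] by simp
  with tv[of i] tv[of j] show ?thesis
    by linarith
qed

section \<open>Two-state chains\<close>

lemma two_state_lazy_eigenvector:
  fixes P :: "real^'n^'n"
  assumes ab: "UNIV = {a, b}" "a \<noteq> b"
    and "stochastic P" "stationary_dist P \<mu>" "\<mu> \<bullet> y = 0"
  shows "lazy P *v y = (1 - (P$a$b + P$b$a) / 2) *\<^sub>R y"
proof -
  have sum2: "(\<Sum>j\<in>UNIV. f j) = f a + f b" for f :: "'n \<Rightarrow> real"
    unfolding ab(1) using ab(2) by simp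
  let ?p = "P$a$b" and ?q = "P$b$a"
  have rows: "P$a$a = 1 - ?p" "P$b$b = 1 - ?q"
    using assms(3) sum2[of "\<lambda>j. P$a$j"] sum2[of "\<lambda>j. P$b$j"] by (simp_all add: stochastic_def)
  have "\<mu>$a + \<mu>$b = 1" "\<mu>$a * ?p + \<mu>$b * P$b$b = \<mu>$b"
    using assms(4) sum2[of "\<lambda>j. \<mu>$j"] sum2[of "\<lambda>i. \<mu>$i * P$i$b"]
    by (simp_all add: stationary_dist_def vec_eq_iff vector_matrix_mult_def)
  moreover have "\<mu>$a * y$a + \<mu>$b * y$b = 0"
    using assms(5) sum2[of "\<lambda>i. \<mu>$i * y$i"] by (simp add: inner_vec_def)
  ultimately have balance: "?q * y$a + ?p * y$b = 0"
    unfolding rows by algebra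
  have "(P *v y)$a = P$a$a * y$a + ?p * y$b" "(P *v y)$b = ?q * y$a + P$b$b * y$b"
    by (simp_all add: matrix_vector_mult_def sum2)
  then have "(P *v y)$a = (1 - ?p - ?q) * y$a" "(P *v y)$b = (1 - ?p - ?q) * y$b"
    using rows balance by algebra+
  then have "(P *v y)$i = (1 - ?p - ?q) * y$i" for i
    using ab by (cases "i = a") auto
  then show ?thesis
    by (simp add: vec_eq_iff lazy_def matrix_vector_mult_add_rdistrib
        flip: scaleR_matrix_vector_assoc) (simp add: algebra_simps)
qed

lemma two_state_mpow_lazy_eigenvector:
  fixes P :: "real^'n^'n"
  assumes "UNIV = {a, b}" "a \<noteq> b" "stochastic P" "stationary_dist P \<mu>" "\<mu> \<bullet> y = 0"
  shows "mpow (lazy P) k *v y = (1 - (P$a$b + P$b$a) / 2)^k *\<^sub>R y"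
  by (induction k)
    (simp_all add: mpow_Suc_mult_vec matrix_vector_mult_scaleR two_state_lazy_eigenvector[OF assms])

lemma two_state_eigenvalue_nonneg:
  fixes P :: "real^'n^'n"
  assumes "UNIV = {a, b}" "a \<noteq> b" "stochastic P"
  shows "0 \<le> 1 - (P$a$b + P$b$a) / 2"
proof -
  have "P$a$b \<le> 1" "P$b$a \<le> 1"
    using assms member_le_sum[of b UNIV "\<lambda>j. P$a$j"] member_le_sum[of a UNIV "\<lambda>j. P$b$j"]
    by (auto simp: stochastic_def)
  then show ?thesis
    by simp
qed

lemma two_state_eigenvalue_le:
  fixes P :: "real^'n^'n"
  assumes ab: "UNIV = {a, b}" "a \<noteq> b"
    and "stochastic P" "stationary_dist P \<mu>" "mixing_params (lazy P) \<mu> C \<rho>"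
  shows "1 - (P$a$b + P$b$a) / 2 \<le> \<rho>"
proof -
  define v where "v = (\<chi> j. if j = a then \<mu>$b else - \<mu>$a)"
  have sum2: "(\<Sum>j\<in>UNIV. f j) = f a + f b" for f :: "'n \<Rightarrow> real"
    unfolding ab(1) using ab(2) by simp
  have "\<mu>$a + \<mu>$b = 1"
    using assms(4) sum2[of "\<lambda>j. \<mu>$j"] by (simp add: stationary_dist_def)
  then have "v$a \<noteq> 0 \<or> v$b \<noteq> 0"
    using ab(2) by (auto simp: v_def)
  then have "v \<noteq> 0"
    by auto
  moreover have orth: "\<mu> \<bullet> v = 0"
    using ab(2) sum2[of "\<lambda>j. \<mu>$j * v$j"] by (simp add: inner_vec_def v_def mult.commute)
  ultimately have "norm (1 - (P$a$b + P$b$a) / 2) \<le> \<rho>"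
    using two_state_lazy_eigenvector[OF ab assms(3,4) orth]
    by (intro mixing_eigenvalue_le[OF assms(5)]) (simp_all add: inner_vec_def scalar_mult_eq_scaleR)
  then show ?thesis
    by simp
qed

lemma two_state_eigenvalue_diff_le:
  fixes P1 P2 :: "real^'n^'n"
  assumes ab: "UNIV = {a, b}" "a \<noteq> b" and "stochastic P1" "stochastic P2"
  shows "\<bar>(P1$a$b + P1$b$a) / 2 - (P2$a$b + P2$b$a) / 2\<bar> \<le> mnorm_inf (P1 - P2) / 2"
proof -
  have sum2: "(\<Sum>j\<in>UNIV. f j) = f a + f b" for f :: "'n \<Rightarrow> real"
    unfolding ab(1) using ab(2) by simp
  have "P1$i$a + P1$i$b = 1" "P2$i$a + P2$i$b = 1" for i
    using assms(3,4) sum2[of "\<lambda>j. P1$i$j"] sum2[of "\<lambda>j. P2$i$j"] by (simp_all add: stochastic_def)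
  moreover have "\<bar>P1$i$a - P2$i$a\<bar> + \<bar>P1$i$b - P2$i$b\<bar> \<le> mnorm_inf (P1 - P2)" for i
    using row_norm_le_mnorm_inf[of "P1 - P2" i] sum2[of "\<lambda>j. \<bar>(P1 - P2)$i$j\<bar>"] by simp
  ultimately have "2 * \<bar>P1$a$b - P2$a$b\<bar> \<le> mnorm_inf (P1 - P2)"
    "2 * \<bar>P1$b$a - P2$b$a\<bar> \<le> mnorm_inf (P1 - P2)"
    by (smt (verit))+
  moreover have "(P1$a$b + P1$b$a) / 2 - (P2$a$b + P2$b$a) / 2 = ((P1$a$b - P2$a$b) + (P1$b$a - P2$b$a)) / 2"
    by algebra
  moreover have "\<bar>(x + y) / 2\<bar> \<le> e / 2" if "2 * \<bar>x\<bar> \<le> e" "2 * \<bar>y\<bar> \<le> e" for x y e :: real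
    using that by (simp add: abs_le_iff) linarith
  ultimately show ?thesis
    by metis
qed

lemma abs_power_diff_le:
  fixes x z :: real
  assumes "0 \<le> x" "x \<le> 1/2" "0 \<le> z" "z \<le> 1/2"
  shows "\<bar>x^n - z^n\<bar> \<le> \<bar>x - z\<bar>"
proof (induction n)
  case (Suc n)
  have "x^Suc n - z^Suc n = x * (x^n - z^n) + z^n * (x - z)"
    by (simp add: algebra_simps)
  moreover have "\<bar>x * (x^n - z^n)\<bar> \<le> 1/2 * \<bar>x^n - z^n\<bar>"
    using mult_right_mono[of x "1/2" "\<bar>x^n - z^n\<bar>"] assms by (simp add: abs_mult)
  moreover have "\<bar>z^n * (x - z)\<bar> \<le> (if n = 0 then 1 else 1/2) * \<bar>x - z\<bar>"
  proof -
    have "z^n \<le> (if n = 0 then 1 else 1/2)"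
    proof (cases n)
      case (Suc m)
      then have "z * z^m \<le> 1/2 * 1"
        using assms power_le_one[of z m] by (intro mult_mono) auto
      then show ?thesis
        using Suc by simp
    qed simp
    then show ?thesis
      using assms by (simp add: abs_mult mult_right_mono)
  qed
  ultimately show ?case
    using Suc.IH abs_triangle_ineq[of "x * (x^n - z^n)" "z^n * (x - z)"]
    by (cases "n = 0") auto
qed simp

lemma abs_power_div_one_minus_diff_le:
  fixes x z :: real
  assumes "0 \<le> x" "x \<le> 1/6" "0 \<le> z" "z \<le> 1/6" "1 \<le> N"
  shows "\<bar>x^N / (1 - x) - z^N / (1 - z)\<bar> \<le> 36/25 * \<bar>x - z\<bar>"
proof -
  have "z^N * (x - z) / ((1 - x) * (1 - z)) = z^N / (1 - x) - z^N / (1 - z)"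
    using assms by (simp add: field_simps)
  then have "x^N / (1 - x) - z^N / (1 - z) = (x^N - z^N) / (1 - x) + z^N * (x - z) / ((1 - x) * (1 - z))"
    by (simp add: diff_divide_distrib)
  moreover have "\<bar>(x^N - z^N) / (1 - x)\<bar> \<le> \<bar>x - z\<bar> * (6/5)"
  proof -
    have "\<bar>x^N - z^N\<bar> \<le> \<bar>x - z\<bar>" "1 / (1 - x) \<le> 6/5"
      using assms abs_power_diff_le[of x z N] by (simp_all add: field_simps)
    then have "\<bar>x^N - z^N\<bar> * (1 / (1 - x)) \<le> \<bar>x - z\<bar> * (6/5)"
      using assms by (intro mult_mono) auto
    then show ?thesis
      using assms by (simp add: abs_div)
  qed
  moreover have "\<bar>z^N * (x - z) / ((1 - x) * (1 - z))\<bar> \<le> \<bar>x - z\<bar> * (1/6 * (6/5) * (6/5))"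
  proof -
    have "z^N \<le> 1/6"
      using assms power_decreasing[of 1 N z] by simp
    moreover have "1 / (1 - x) \<le> 6/5" "1 / (1 - z) \<le> 6/5"
      using assms by (simp_all add: field_simps)
    ultimately have "z^N * (1 / (1 - x)) * (1 / (1 - z)) \<le> 1/6 * (6/5) * (6/5)"
      using assms by (intro mult_mono) auto
    then have "\<bar>x - z\<bar> * (z^N * (1 / (1 - x)) * (1 / (1 - z))) \<le> \<bar>x - z\<bar> * (1/6 * (6/5) * (6/5))"
      by (rule mult_left_mono) simp
    moreover have "\<bar>z^N * (x - z) / ((1 - x) * (1 - z))\<bar> = \<bar>x - z\<bar> * (z^N * (1 / (1 - x)) * (1 / (1 - z)))"
      using assms by (simp add: abs_mult abs_div)
    ultimately show ?thesis
      by simp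
  qed
  ultimately show ?thesis
    using abs_triangle_ineq[of "(x^N - z^N) / (1 - x)" "z^N * (x - z) / ((1 - x) * (1 - z))"]
    by linarith
qed

lemma infnorm_scaleR_diff_le:
  fixes y1 y2 :: "'a::euclidean_space"
  assumes "0 \<le> g1" "g1 \<le> g" "0 \<le> g2" "g2 \<le> g"
  shows "infnorm (g1 *\<^sub>R y1 - g2 *\<^sub>R y2) \<le> g * infnorm (y1 - y2) + \<bar>g1 - g2\<bar> / 2 * (infnorm y1 + infnorm y2)"
    and "infnorm (g1 *\<^sub>R y1 - g2 *\<^sub>R y2) \<le> g * (infnorm y1 + infnorm y2)"
proof -
  have "((g1 + g2) / 2) *\<^sub>R (y1 - y2) + ((g1 - g2) / 2) *\<^sub>R (y1 + y2)
      = ((g1 + g2) / 2 + (g1 - g2) / 2) *\<^sub>R y1 - ((g1 + g2) / 2 - (g1 - g2) / 2) *\<^sub>R y2"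
    by (simp only: scaleR_add_left scaleR_diff_left scaleR_add_right scaleR_diff_right) (simp add: algebra_simps)
  also have "\<dots> = g1 *\<^sub>R y1 - g2 *\<^sub>R y2"
    by (simp add: field_simps)
  finally have "infnorm (g1 *\<^sub>R y1 - g2 *\<^sub>R y2)
      \<le> \<bar>(g1 + g2) / 2\<bar> * infnorm (y1 - y2) + \<bar>(g1 - g2) / 2\<bar> * infnorm (y1 + y2)"
    by (metis infnorm_mul infnorm_triangle)
  also have "\<dots> \<le> g * infnorm (y1 - y2) + \<bar>g1 - g2\<bar> / 2 * (infnorm y1 + infnorm y2)"
    using assms by (intro add_mono mult_mono) (auto simp: infnorm_pos_le infnorm_triangle)
  finally show "infnorm (g1 *\<^sub>R y1 - g2 *\<^sub>R y2) \<le> g * infnorm (y1 - y2) + \<bar>g1 - g2\<bar> / 2 * (infnorm y1 + infnorm y2)" .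
  have "infnorm (g1 *\<^sub>R y1 - g2 *\<^sub>R y2) \<le> g1 * infnorm y1 + g2 * infnorm y2"
    using infnorm_triangle[of "g1 *\<^sub>R y1" "- (g2 *\<^sub>R y2)"] assms by (simp add: infnorm_mul infnorm_neg)
  also have "\<dots> \<le> g * (infnorm y1 + infnorm y2)"
    using assms by (simp add: distrib_left add_mono mult_right_mono infnorm_pos_le)
  finally show "infnorm (g1 *\<^sub>R y1 - g2 *\<^sub>R y2) \<le> g * (infnorm y1 + infnorm y2)" .
qed

lemma geometric_tail_sums:
  fixes \<theta> :: real
  shows "\<bar>\<theta>\<bar> < 1 \<Longrightarrow> (\<lambda>k. \<theta>^(k + N)) sums (\<theta>^N / (1 - \<theta>))"
  using sums_mult[OF geometric_sums, of \<theta> "\<theta>^N"] by (simp add: power_add mult.commute)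

lemma two_state_tail_le:
  fixes P1 P2 :: "real^'n^'n"
  assumes "CARD('n) = 2"
    and st1: "stochastic P1" "stationary_dist P1 \<mu>1" "mixing_params (lazy P1) \<mu>1 C \<rho>"
    and st2: "stochastic P2" "stationary_dist P2 \<mu>2" "mixing_params (lazy P2) \<mu>2 C \<rho>"
    and y: "\<mu>1 \<bullet> y1 = 0" "\<mu>2 \<bullet> y2 = 0" and "\<rho> < 1/6" "1 \<le> N"
  shows "infnorm (\<Sum>k. mpow (lazy P1) (k + N) *v y1 - mpow (lazy P2) (k + N) *v y2)
      \<le> \<rho>^N / (1 - \<rho>) * infnorm (y1 - y2) + 9/25 * mnorm_inf (P1 - P2) * (infnorm y1 + infnorm y2)"
    and "infnorm (\<Sum>k. mpow (lazy P1) (k + N) *v y1 - mpow (lazy P2) (k + N) *v y2)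
      \<le> \<rho>^N / (1 - \<rho>) * (infnorm y1 + infnorm y2)"
proof -
  obtain a b :: 'n where ab: "UNIV = {a, b}" "a \<noteq> b"
    using \<open>CARD('n) = 2\<close> by (metis card_2_iff)
  define \<theta>1 where "\<theta>1 = 1 - (P1$a$b + P1$b$a) / 2"
  define \<theta>2 where "\<theta>2 = 1 - (P2$a$b + P2$b$a) / 2"
  define g where "g = (\<lambda>\<theta>::real. \<theta>^N / (1 - \<theta>))"
  have \<rho>: "0 < \<rho>"
    using mixing_paramsD(2)[OF st1(3)] .
  have \<theta>1: "0 \<le> \<theta>1" "\<theta>1 \<le> \<rho>"
    unfolding \<theta>1_def using two_state_eigenvalue_nonneg[OF ab st1(1)] two_state_eigenvalue_le[OF ab st1] by auto
  have \<theta>2: "0 \<le> \<theta>2" "\<theta>2 \<le> \<rho>"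
    unfolding \<theta>2_def using two_state_eigenvalue_nonneg[OF ab st2(1)] two_state_eigenvalue_le[OF ab st2] by auto
  have "(\<lambda>k. \<theta>1^(k + N) *\<^sub>R y1 - \<theta>2^(k + N) *\<^sub>R y2) sums (g \<theta>1 *\<^sub>R y1 - g \<theta>2 *\<^sub>R y2)"
    unfolding g_def using \<theta>1 \<theta>2 \<open>\<rho> < 1/6\<close>
    by (intro sums_diff sums_scaleR_left geometric_tail_sums) auto
  then have tail: "(\<Sum>k. mpow (lazy P1) (k + N) *v y1 - mpow (lazy P2) (k + N) *v y2) = g \<theta>1 *\<^sub>R y1 - g \<theta>2 *\<^sub>R y2"
    unfolding \<theta>1_def \<theta>2_def
    by (simp add: two_state_mpow_lazy_eigenvector[OF ab st1(1,2) y(1)]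
        two_state_mpow_lazy_eigenvector[OF ab st2(1,2) y(2)] sums_iff)
  have g_mono: "0 \<le> g \<theta> \<and> g \<theta> \<le> g \<rho>" if "0 \<le> \<theta>" "\<theta> \<le> \<rho>" for \<theta>
    using that \<open>\<rho> < 1/6\<close> by (auto simp: g_def intro!: frac_le power_mono)
  have "\<bar>g \<theta>1 - g \<theta>2\<bar> \<le> 36/25 * \<bar>\<theta>1 - \<theta>2\<bar>"
    unfolding g_def using \<theta>1 \<theta>2 \<open>\<rho> < 1/6\<close> \<open>1 \<le> N\<close> by (intro abs_power_div_one_minus_diff_le) auto
  also have "\<dots> \<le> 36/25 * (mnorm_inf (P1 - P2) / 2)"
    using two_state_eigenvalue_diff_le[OF ab st1(1) st2(1)] by (simp add: \<theta>1_def \<theta>2_def abs_minus_commute)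
  finally have g_diff: "\<bar>g \<theta>1 - g \<theta>2\<bar> / 2 \<le> 9/25 * mnorm_inf (P1 - P2)"
    by simp
  show "infnorm (\<Sum>k. mpow (lazy P1) (k + N) *v y1 - mpow (lazy P2) (k + N) *v y2)
      \<le> \<rho>^N / (1 - \<rho>) * infnorm (y1 - y2) + 9/25 * mnorm_inf (P1 - P2) * (infnorm y1 + infnorm y2)"
    unfolding tail
    using infnorm_scaleR_diff_le(1)[of "g \<theta>1" "g \<rho>" "g \<theta>2" y1 y2] g_mono[OF \<theta>1] g_mono[OF \<theta>2]
      mult_right_mono[OF g_diff, of "infnorm y1 + infnorm y2"]
    by (simp add: g_def infnorm_pos_le add_nonneg_nonneg)
  show "infnorm (\<Sum>k. mpow (lazy P1) (k + N) *v y1 - mpow (lazy P2) (k + N) *v y2)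
      \<le> \<rho>^N / (1 - \<rho>) * (infnorm y1 + infnorm y2)"
    unfolding tail by (rule infnorm_scaleR_diff_le(2)) (use g_mono[OF \<theta>1] g_mono[OF \<theta>2] in \<open>simp_all add: g_def\<close>)
qed

section \<open>The perturbation bound\<close>

lemma powr_le_linear:
  fixes x f :: real
  assumes "0 < x" "0 \<le> f" "f \<le> 1"
  shows "x powr f \<le> 1 + f * (x - 1)"
proof -
  have "exp ((1 - f) *\<^sub>R 0 + f *\<^sub>R ln x) \<le> (1 - f) * exp 0 + f * exp (ln x)"
    using assms by (intro convex_onD[OF exp_convex]) auto
  then show ?thesis
    using assms by (simp add: powr_def algebra_simps)
qed

lemma inverse_powr_le_two:
  fixes \<rho> f :: real
  assumes "0 < \<rho>" "\<rho> < 1" "1 \<le> N" "0 \<le> f" "f \<le> 1" "f \<le> \<rho>^N / (1 - \<rho>)"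
  shows "(1/\<rho>) powr f \<le> 2"
proof -
  have "(1/\<rho>) powr f \<le> 1 + f * (1/\<rho> - 1)"
    using assms by (intro powr_le_linear) auto
  also have "\<dots> \<le> 1 + \<rho>^N / (1 - \<rho>) * (1/\<rho> - 1)"
    using assms by (intro add_left_mono mult_right_mono) auto
  also have "\<rho>^N / (1 - \<rho>) * (1/\<rho> - 1) = \<rho>^(N - 1)"
    using assms by (simp add: field_simps power_eq_if)
  also have "\<rho>^(N - 1) \<le> 1"
    using assms by (simp add: power_le_one)
  finally show ?thesis
    by simp
qed

lemma le_interpolated_bound:
  fixes T g f D a b :: real
  assumes "T \<le> g * D + a" "T \<le> b" "0 \<le> f" "f \<le> g" "a \<le> b"
  shows "T \<le> f * D + b"
proof (cases "g = 0")
  case False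
  define w where "w = f / g"
  have w: "0 \<le> w" "w \<le> 1" "w * g = f"
    using assms False by (simp_all add: w_def)
  have "T = w * T + (1 - w) * T"
    by (simp add: algebra_simps)
  also have "\<dots> \<le> w * (g * D + a) + (1 - w) * b"
    using assms w by (intro add_mono mult_left_mono) auto
  also have "\<dots> = f * D + (w * a + (1 - w) * b)"
    by (simp add: algebra_simps flip: w(3))
  also have "w * a + (1 - w) * b \<le> b"
    using assms w mult_left_mono[OF \<open>a \<le> b\<close> \<open>0 \<le> w\<close>] by (simp add: algebra_simps)
  finally show ?thesis
    by simp
qed (use assms in simp)

lemma poisson_tail_le_large_rate:
  fixes P1 P2 :: "real^'n^'n"
  assumes mix1: "mixing_params (lazy P1) \<mu>1 C \<rho>" and mix2: "mixing_params (lazy P2) \<mu>2 C \<rho>"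
    and y: "\<mu>1 \<bullet> y1 = 0" "\<mu>2 \<bullet> y2 = 0" and "1/6 \<le> \<rho>" "0 \<le> f" "f \<le> 1"
    and rate: "8 * C * \<rho>^N = mnorm_inf (P1 - P2) * (1 - \<rho>) * (1/\<rho>) powr f"
  shows "infnorm (\<Sum>k. mpow (lazy P1) (k + N) *v y1 - mpow (lazy P2) (k + N) *v y2)
    \<le> f * infnorm (y1 - y2) + mnorm_inf (P1 - P2) * (infnorm y1 + infnorm y2) * (1/2 + f)"
proof -
  let ?\<epsilon> = "mnorm_inf (P1 - P2)" and ?S = "infnorm y1 + infnorm y2"
  note \<rho> = mixing_paramsD[OF mix1]
  have "(1/\<rho>) powr f \<le> 1 + f * (1/\<rho> - 1)"
    using \<rho> assms by (intro powr_le_linear) auto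
  also have "\<dots> \<le> 2 + 4 * f"
    using \<open>1/6 \<le> \<rho>\<close> \<rho> \<open>0 \<le> f\<close> \<open>f \<le> 1\<close> mult_left_mono[of "1/\<rho> - 1" 5 f]
    by (simp add: field_simps)
  finally have "(1/\<rho>) powr f / 4 \<le> 1/2 + f"
    by simp
  have "infnorm (\<Sum>k. mpow (lazy P1) (k + N) *v y1 - mpow (lazy P2) (k + N) *v y2)
      \<le> 2 * C * \<rho>^N / (1 - \<rho>) * ?S"
    by (rule infnorm_suminf_mpow_tail_le[OF mix1 mix2 y])
  also have "2 * C * \<rho>^N / (1 - \<rho>) = ?\<epsilon> * ((1/\<rho>) powr f / 4)"
    using rate \<rho> by (simp add: field_simps)
  also have "?\<epsilon> * ((1/\<rho>) powr f / 4) * ?S \<le> ?\<epsilon> * (1/2 + f) * ?S"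
    using \<open>(1/\<rho>) powr f / 4 \<le> 1/2 + f\<close>
    by (intro mult_right_mono mult_left_mono) (auto simp: mnorm_inf_nonneg infnorm_pos_le)
  finally show ?thesis
    using mult_nonneg_nonneg[OF \<open>0 \<le> f\<close> infnorm_pos_le[of "y1 - y2"]]
    by (intro add_increasing) (simp_all add: mult_ac)
qed

lemma poisson_tail_le_two_state:
  fixes P1 P2 :: "real^'n^'n"
  assumes "CARD('n) = 2"
    and P1: "stochastic P1" "stationary_dist P1 \<mu>1" "mixing_params (lazy P1) \<mu>1 C \<rho>"
    and P2: "stochastic P2" "stationary_dist P2 \<mu>2" "mixing_params (lazy P2) \<mu>2 C \<rho>"
    and y: "\<mu>1 \<bullet> y1 = 0" "\<mu>2 \<bullet> y2 = 0" and "\<rho> < 1/6" "1 \<le> N" "0 \<le> f" "f \<le> 1"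
    and rate: "8 * C * \<rho>^N = mnorm_inf (P1 - P2) * (1 - \<rho>) * (1/\<rho>) powr f"
  shows "infnorm (\<Sum>k. mpow (lazy P1) (k + N) *v y1 - mpow (lazy P2) (k + N) *v y2)
    \<le> f * infnorm (y1 - y2) + mnorm_inf (P1 - P2) * (infnorm y1 + infnorm y2) * (1/2 + f)"
proof -
  define T where "T = infnorm (\<Sum>k. mpow (lazy P1) (k + N) *v y1 - mpow (lazy P2) (k + N) *v y2)"
  define g where "g = \<rho>^N / (1 - \<rho>)"
  let ?\<epsilon> = "mnorm_inf (P1 - P2)" and ?S = "infnorm y1 + infnorm y2" and ?D = "infnorm (y1 - y2)"
  note \<rho> = mixing_paramsD[OF P1(3)]
  have S: "0 \<le> ?S" "0 \<le> ?D" "0 \<le> ?\<epsilon>"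
    by (simp_all add: infnorm_pos_le add_nonneg_nonneg mnorm_inf_nonneg)
  have T_le: "T \<le> g * ?D + 9/25 * ?\<epsilon> * ?S" "T \<le> g * ?S"
    unfolding T_def g_def using two_state_tail_le[OF assms(1) P1 P2 y \<open>\<rho> < 1/6\<close> \<open>1 \<le> N\<close>] by simp_all
  have "1/2 \<le> C"
    using mixing_const_ge_half[OF _ _ P1(3)] P1(2) assms(1) by (simp add: stationary_dist_def)
  have g: "g = ?\<epsilon> * (1/\<rho>) powr f / (8 * C)"
    unfolding g_def using rate \<rho> by (simp add: field_simps)
  have "T \<le> f * ?D + ?\<epsilon> * ?S / 2"
  proof (cases "g \<le> f")
    case True
    then show ?thesis
      using T_le(1) mult_right_mono[OF True, of ?D] S mult_nonneg_nonneg[OF S(3,1)] by linarith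
  next
    case False
    then have "(1/\<rho>) powr f \<le> 2"
      using \<rho> assms(11-13) by (intro inverse_powr_le_two) (auto simp: g_def)
    then have "?\<epsilon> * (1/\<rho>) powr f \<le> ?\<epsilon> * 2"
      using S by (intro mult_left_mono) auto
    then have "g \<le> ?\<epsilon> * 2 / (8 * C)"
      unfolding g using \<open>1/2 \<le> C\<close> by (intro divide_right_mono) auto
    also have "\<dots> \<le> ?\<epsilon> * 2 / 4"
      using \<open>1/2 \<le> C\<close> S by (intro divide_left_mono) auto
    finally have "T \<le> ?\<epsilon> * ?S / 2"
      using T_le(2) S mult_right_mono[of g "?\<epsilon> / 2" ?S] by simp
    then show ?thesis
      by (rule le_interpolated_bound[OF T_le(1) _ \<open>0 \<le> f\<close>]) (use False S in auto)
  qed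
  also have "\<dots> \<le> f * ?D + ?\<epsilon> * ?S * (1/2 + f)"
    using S \<open>0 \<le> f\<close> by (simp add: algebra_simps infnorm_pos_le)
  finally show ?thesis
    unfolding T_def .
qed

lemma poisson_tail_le:
  fixes P1 P2 :: "real^'n^'n"
  assumes P1: "stochastic P1" "stationary_dist P1 \<mu>1" "mixing_params (lazy P1) \<mu>1 C \<rho>"
    and P2: "stochastic P2" "stationary_dist P2 \<mu>2" "mixing_params (lazy P2) \<mu>2 C \<rho>"
    and y: "\<mu>1 \<bullet> y1 = 0" "\<mu>2 \<bullet> y2 = 0" and "2 \<le> CARD('n)" "1 \<le> N" "0 \<le> f" "f \<le> 1"
    and rate: "8 * C * \<rho>^N = mnorm_inf (P1 - P2) * (1 - \<rho>) * (1/\<rho>) powr f"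
  shows "infnorm (\<Sum>k. mpow (lazy P1) (k + N) *v y1 - mpow (lazy P2) (k + N) *v y2)
    \<le> f * infnorm (y1 - y2) + mnorm_inf (P1 - P2) * (infnorm y1 + infnorm y2) * (1/2 + f)"
proof (cases "1/6 \<le> \<rho>")
  case True
  then show ?thesis
    by (rule poisson_tail_le_large_rate[OF P1(3) P2(3) y _ assms(11-13)])
next
  case False
  have "CARD('n) = 2"
  proof (rule ccontr)
    assume "CARD('n) \<noteq> 2"
    then have "3 \<le> real CARD('n)"
      using \<open>2 \<le> CARD('n)\<close> by linarith
    moreover have "real CARD('n) / 2 - 1 \<le> real CARD('n) * \<rho>"
      by (rule mixing_rate_ge[OF P1])
    ultimately have "real CARD('n) * (1/6) \<le> real CARD('n) * \<rho>"
      by linarith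
    with False \<open>3 \<le> real CARD('n)\<close> show False
      by simp
  qed
  moreover have "\<rho> < 1/6"
    using False by simp
  ultimately show ?thesis
    by (rule poisson_tail_le_two_state[OF _ P1 P2 y _ assms(10-13)])
qed

lemma head_tail_coeff_le:
  fixes f :: real
  assumes "1 \<le> N" "0 \<le> f"
  shows "real N * (real N - 1) / 8 + (1/2 + f) \<le> (real N + f)^2 / 2"
proof -
  define n where "n = real N"
  have "1 \<le> n"
    using assms(1) by (simp add: n_def)
  then have "1 * 1 \<le> n * n"
    by (intro mult_mono) auto
  moreover have "0 \<le> f * (n - 1)" "0 \<le> f * f"
    using assms(2) \<open>1 \<le> n\<close> by simp_all
  ultimately have "0 \<le> 3 * (n * n) + n - 4 + 8 * (f * (n - 1)) + 4 * (f * f)"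
    using \<open>1 \<le> n\<close> by linarith
  also have "\<dots> = 8 * ((n + f)^2 / 2 - (n * (n - 1) / 8 + (1/2 + f)))"
    by (simp add: power2_eq_square field_simps)
  finally show ?thesis
    unfolding n_def by simp
qed

lemma critical_exponent:
  fixes \<epsilon> C \<rho> :: real
  assumes "0 < \<epsilon>" "\<epsilon> \<le> 8 * C * \<rho>" "0 < C" "0 < \<rho>" "\<rho> < 1"
  defines "K \<equiv> (ln (\<epsilon> * (1 - \<rho>)) - ln (8 * C)) / ln \<rho>"
  shows "1 < K" and "8 * C * \<rho>^nat \<lfloor>K\<rfloor> = \<epsilon> * (1 - \<rho>) * (1/\<rho>) powr (K - nat \<lfloor>K\<rfloor>)"
proof -
  define r where "r = \<epsilon> * (1 - \<rho>) / (8 * C)"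
  have "0 < r"
    using assms(1-5) by (simp add: r_def)
  have "r \<le> 8 * C * \<rho> * (1 - \<rho>) / (8 * C)"
    unfolding r_def using assms(1-5) by (intro divide_right_mono mult_right_mono) auto
  also have "\<dots> = \<rho> * (1 - \<rho>)"
    using assms(1-5) by simp
  also have "\<dots> < \<rho>"
    using assms(1-5) by (simp add: algebra_simps)
  finally have "ln r < ln \<rho>"
    using \<open>0 < r\<close> by simp
  have K: "K = log \<rho> r"
    unfolding K_def r_def log_def using assms(1-5) by (simp add: ln_div)
  then show "1 < K"
    using \<open>ln r < ln \<rho>\<close> assms(4,5) by (simp add: log_def less_divide_eq_1_neg)
  have "\<rho>^nat \<lfloor>K\<rfloor> = \<rho> powr real (nat \<lfloor>K\<rfloor>)"
    by (rule powr_realpow[symmetric]) fact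
  also have "\<dots> = \<rho> powr (K - (K - nat \<lfloor>K\<rfloor>))"
    by simp
  also have "\<dots> = \<rho> powr K / \<rho> powr (K - nat \<lfloor>K\<rfloor>)"
    by (rule powr_diff)
  also have "\<dots> = r * (1/\<rho>) powr (K - nat \<lfloor>K\<rfloor>)"
    using assms(4,5) \<open>0 < r\<close> by (simp add: K powr_divide)
  finally show "8 * C * \<rho>^nat \<lfloor>K\<rfloor> = \<epsilon> * (1 - \<rho>) * (1/\<rho>) powr (K - nat \<lfloor>K\<rfloor>)"
    using assms(1-5) by (simp add: r_def)
qed

lemma infnorm_lazy_poisson_diff_le:
  fixes P1 P2 :: "real^'n^'n"
  assumes P1: "stochastic P1" "stationary_dist P1 \<mu>1" "mixing_params (lazy P1) \<mu>1 C \<rho>"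
    and P2: "stochastic P2" "stationary_dist P2 \<mu>2" "mixing_params (lazy P2) \<mu>2 C \<rho>"
    and y: "\<mu>1 \<bullet> y1 = 0" "\<mu>2 \<bullet> y2 = 0" and "P1 \<noteq> P2"
  defines "\<epsilon> \<equiv> mnorm_inf (P1 - P2)"
    and "K \<equiv> (ln (mnorm_inf (P1 - P2) * (1 - \<rho>)) - ln (8 * C)) / ln \<rho>"
  shows "infnorm ((\<Sum>k. mpow (lazy P1) k *v y1) /\<^sub>R 2 - (\<Sum>k. mpow (lazy P2) k *v y2) /\<^sub>R 2)
    \<le> 1/4 * K^2 * \<epsilon> * (infnorm y1 + infnorm y2) + 1/2 * K * infnorm (y1 - y2)"
proof -
  let ?S = "infnorm y1 + infnorm y2" and ?D = "infnorm (y1 - y2)"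
  note \<rho> = mixing_paramsD[OF P1(3)]
  have card: "2 \<le> CARD('n)"
    by (rule card_ge_2_if_stochastic_neq[OF P1(1) P2(1) \<open>P1 \<noteq> P2\<close>])
  have "0 < \<epsilon>"
    unfolding \<epsilon>_def using \<open>P1 \<noteq> P2\<close> by (simp add: mnorm_inf_pos)
  have "\<epsilon> \<le> 8 * C * \<rho>"
    unfolding \<epsilon>_def by (rule mnorm_inf_diff_le_mixing[OF P1 P2 card])
  note K = critical_exponent[OF \<open>0 < \<epsilon>\<close> \<open>\<epsilon> \<le> 8 * C * \<rho>\<close> \<rho>, unfolded \<epsilon>_def, folded K_def \<epsilon>_def]
  define N where "N = nat \<lfloor>K\<rfloor>"
  define f where "f = K - N"
  have N: "1 \<le> N" "0 \<le> f" "f \<le> 1" "K = N + f"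
    using K(1) by (simp_all add: N_def f_def le_nat_floor) linarith+
  have rate: "8 * C * \<rho>^N = \<epsilon> * (1 - \<rho>) * (1/\<rho>) powr f"
    using K(2) by (simp add: N_def f_def)
  define G where "G k = mpow (lazy P1) k *v y1 - mpow (lazy P2) k *v y2" for k
  have split: "(\<Sum>k. mpow (lazy P1) k *v y1) /\<^sub>R 2 - (\<Sum>k. mpow (lazy P2) k *v y2) /\<^sub>R 2
      = (1/2) *\<^sub>R ((\<Sum>k. G (k + N)) + (\<Sum>k<N. G k))"
    using suminf_diff_split[OF summable_mpow_mult[OF P1(3) y(1)] summable_mpow_mult[OF P2(3) y(2)]]
    by (simp add: G_def flip: scaleR_diff_right)
  have lazy_diff: "mnorm_inf (lazy P1 - lazy P2) = \<epsilon> / 2"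
    by (simp add: lazy_minus_lazy mnorm_inf_scaleR \<epsilon>_def)
  have head: "infnorm (\<Sum>k<N. G k) \<le> N * ?D + N * (real N - 1) / 8 * \<epsilon> * ?S"
    using infnorm_sum_mpow_mult_diff_le[OF stochastic_lazy[OF P1(1)] stochastic_lazy[OF P2(1)], where N = N]
    by (simp add: G_def lazy_diff)
  have tail: "infnorm (\<Sum>k. G (k + N)) \<le> f * ?D + \<epsilon> * ?S * (1/2 + f)"
    using rate unfolding G_def \<epsilon>_def by (rule poisson_tail_le[OF P1 P2 y card N(1-3)])
  have "infnorm ((1/2) *\<^sub>R ((\<Sum>k. G (k + N)) + (\<Sum>k<N. G k)))
      \<le> (infnorm (\<Sum>k. G (k + N)) + infnorm (\<Sum>k<N. G k)) / 2"
    by (simp add: infnorm_mul infnorm_triangle)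
  also have "\<dots> \<le> ((f * ?D + \<epsilon> * ?S * (1/2 + f)) + (N * ?D + N * (real N - 1) / 8 * \<epsilon> * ?S)) / 2"
    using head tail by (intro divide_right_mono add_mono) auto
  also have "\<dots> = (K * ?D + \<epsilon> * ?S * (N * (real N - 1) / 8 + (1/2 + f))) / 2"
    using N(4) by (simp add: algebra_simps)
  also have "\<dots> \<le> (K * ?D + \<epsilon> * ?S * (K^2 / 2)) / 2"
    using head_tail_coeff_le[OF N(1,2)] \<open>0 < \<epsilon>\<close> N(4)
    by (intro divide_right_mono add_left_mono mult_left_mono) (simp_all add: infnorm_pos_le)
  finally show ?thesis
    unfolding split by (simp add: algebra_simps)
qed

theorem proposition1:
  fixes P P1 P2 :: "real^'n^'n" and \<mu> \<mu>1 \<mu>2 :: "real^'n"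
    and C \<rho> C1 \<rho>1 C2 \<rho>2 :: real
  assumes "stochastic P" "irreducible P" "stationary_dist P \<mu>"
    and "stochastic P1" "irreducible P1" "stationary_dist P1 \<mu>1"
    and "stochastic P2" "irreducible P2" "stationary_dist P2 \<mu>2"
    and "mixing_params (lazy P) \<mu> C \<rho>"
    and "mixing_params (lazy P1) \<mu>1 C1 \<rho>1"
    and "mixing_params (lazy P2) \<mu>2 C2 \<rho>2"
  shows
    "(\<forall>y::real^'n. \<mu> \<bullet> y = 0 \<longrightarrow>
        (let x = (\<Sum>k. mpow (lazy P) k *v y) /\<^sub>R 2 in
          summable (\<lambda>k. mpow (lazy P) k *v y) \<and>
          (mat 1 - P) *v x = y \<and>
          vnorm_inf x \<le> C / (1 - \<rho>) * vnorm_inf y))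
   \<and> (\<forall>y1 y2 :: real^'n. \<mu>1 \<bullet> y1 = 0 \<longrightarrow> \<mu>2 \<bullet> y2 = 0 \<longrightarrow> P1 \<noteq> P2 \<longrightarrow>
        (let x1 = (\<Sum>k. mpow (lazy P1) k *v y1) /\<^sub>R 2;
             x2 = (\<Sum>k. mpow (lazy P2) k *v y2) /\<^sub>R 2;
             Cmax = max C1 C2; \<rho>max = max \<rho>1 \<rho>2;
             \<epsilon> = mnorm_inf (P1 - P2);
             K = (ln (\<epsilon> * (1 - \<rho>max)) - ln (8 * Cmax)) / ln \<rho>max in
          vnorm_inf (x1 - x2) \<le>
            1/4 * K^2 * \<epsilon> * (vnorm_inf y1 + vnorm_inf y2)
            + 1/2 * K * vnorm_inf (y1 - y2)))"
proof -
  have "max \<rho>1 \<rho>2 < 1"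
    using mixing_paramsD(3)[OF assms(11)] mixing_paramsD(3)[OF assms(12)] by simp
  then have "mixing_params (lazy P1) \<mu>1 (max C1 C2) (max \<rho>1 \<rho>2)"
    "mixing_params (lazy P2) \<mu>2 (max C1 C2) (max \<rho>1 \<rho>2)"
    by (rule mixing_params_mono[OF assms(11) max.cobounded1 max.cobounded1]
        mixing_params_mono[OF assms(12) max.cobounded2 max.cobounded2])+
  then show ?thesis
    unfolding Let_def vnorm_inf_eq_infnorm
    using lazy_poisson_series[OF assms(10)] infnorm_lazy_poisson_diff_le[OF assms(4,6) _ assms(7,9)]
    by blast
qed

end
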